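(* Let $f\colon M^n\to\mathbb{S}^{n+m}$ be an isometric immersion, $x\in M^n$, and $k$ an integer with $2\leq k\leq n/2$, and assume that at $x$ one has $\mathrm{Ric}_M(X)\geq b(n,k,H(x))$ for every unit $X\in T_xM$, where $b(n,k,H)=\frac{n(k-1)}{k}+\frac{n(k-1)H}{2k^2}\big(nH+\sqrt{n^2H^2+4k(n-k)}\big)$. For an integer $1\leq p\leq n-1$ and an orthonormal basis $\{e_1,\dots,e_n\}$ of $T_xM$ consider the inequality $$\sum_{i=1}^p\sum_{j=p+1}^n\big(2\|\alpha_f(e_i,e_j)\|^2-\langle\alpha_f(e_i,e_i),\alpha_f(e_j,e_j)\rangle\big)\leq p(n-p).\qquad(\#)$$ Then at $x$: (i) $(\#)$ holds for every orthonormal basis of $T_xM$ and every $1\leq p\leq k$, and it is strict for $p<k$. Moreover, if $\mathrm{Ric}_M(X)>b(n,k,H(x))$ for all unit $X\in T_xM$, then $(\#)$ is also strict for $p=k$. (ii) Assume $H(x)\neq 0$ if $k=2$. Then equality holds in $(\#)$ for an orthonormal basis $\{e_1,\dots,e_n\}$ of $T_xM$ if and only if $p=k$ and there is a Dupin principal normal $\eta\in N_fM(x)$ with $\|\eta\|=\lambda(n,k,H(x))$ such that $\mathrm{span}\{e_1,\dots,e_k\}\subset E_\eta(x)$. Moreover, in that case $\mathrm{Ric}_M(X)=b(n,k,H(x))$ for every unit $X\in\mathrm{span}\{e_1,\dots,e_k\}$, and if $H(x)\neq 0$ then $\eta$ and $\mathcal H(x)$ are collinear. (iii) If $H(x)=0$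 and $k=2$, then equality holds in $(\#)$ for an orthonormal basis $\{e_1,\dots,e_n\}$ of $T_xM$ if and only if $p=2$, there is $\eta\in N_fM(x)$ with $\|\eta\|\leq\lambda(n,2,0)$ such that $\alpha_f(X,Y)=\langle X,Y\rangle\eta$ for all $X,Y\in\mathrm{span}\{e_1,e_2\}$, and $\mathrm{Ric}_M(X)=b(n,2,0)$ for every unit $X\in\mathrm{span}\{e_1,e_2\}$.
   Context: $\mathbb{S}^{n+m}$ is the unit sphere; $\alpha_f$ is the second fundamental form of $f$ with values in the normal bundle $N_fM$, $\mathcal H=\frac1n\mathrm{tr}\,\alpha_f$ the normalized mean curvature vector and $H=\|\mathcal H\|$. $\mathrm{Ric}_M(X)$ is the non-normalized Ricci curvature in the unit direction $X$. $\lambda(n,k,H)=\frac{1}{2k}\big(nH+\sqrt{n^2H^2+4k(n-k)}\big)$. A vector $\eta\in N_fM(x)$ is a Dupin principal normal if $E_\eta(x)=\{X\in T_xM:\alpha_f(X,Y)=\langle X,Y\rangle\eta \text{ for all } Y\in T_xM\}$ has dimension at least $2$. *)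

theory Defs
  imports "HOL-Analysis.Analysis"
begin

text \<open>Pointwise setting at a fixed point x: T = T_xM is modelled by real^'n
 (n = CARD('n)), the normal space N_fM(x) by real^'m, and the second
 fundamental form at x by a symmetric bilinear map alpha.\<close>

definition sff :: "(real^'n \<Rightarrow> real^'n \<Rightarrow> real^'m) \<Rightarrow> bool" where
  "sff \<alpha> \<longleftrightarrow> (\<forall>X. linear (\<alpha> X)) \<and> (\<forall>Y. linear (\<lambda>X. \<alpha> X Y)) \<and> (\<forall>X Y. \<alpha> X Y = \<alpha> Y X)"

definition meanvec :: "(real^'n \<Rightarrow> real^'n \<Rightarrow> real^'m) \<Rightarrow> real^'m" where
  "meanvec \<alpha> = (1 / real CARD('n)) *\<^sub>R (\<Sum>b\<in>Basis. \<alpha> b b)"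

definition meancurv :: "(real^'n \<Rightarrow> real^'n \<Rightarrow> real^'m) \<Rightarrow> real" where
  "meancurv \<alpha> = norm (meanvec \<alpha>)"

text \<open>Curvature tensor of M at x given by the Gauss equation for a submanifold of
 the unit sphere: R(X,Y,Z,W) = <X,W><Y,Z> - <X,Z><Y,W> + <a(X,W),a(Y,Z)> - <a(X,Z),a(Y,W)>.\<close>
definition gauss_R :: "(real^'n \<Rightarrow> real^'n \<Rightarrow> real^'m) \<Rightarrow> real^'n \<Rightarrow> real^'n \<Rightarrow> real^'n \<Rightarrow> real^'n \<Rightarrow> real" where
  "gauss_R \<alpha> X Y Z W = (X \<bullet> W) * (Y \<bullet> Z) - (X \<bullet> Z) * (Y \<bullet> W)
      + \<alpha> X W \<bullet> \<alpha> Y Z - \<alpha> X Z \<bullet> \<alpha> Y W"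

text \<open>Non-normalized Ricci curvature Ric(X) = tr (Y \<mapsto> R(Y,X)X) = sum_b R(b,X,X,b).\<close>
definition Ric :: "(real^'n \<Rightarrow> real^'n \<Rightarrow> real^'m) \<Rightarrow> real^'n \<Rightarrow> real" where
  "Ric \<alpha> X = (\<Sum>b\<in>Basis. gauss_R \<alpha> b X X b)"

definition lam :: "real \<Rightarrow> real \<Rightarrow> real \<Rightarrow> real" where
  "lam n k H = (n * H + sqrt (n\<^sup>2 * H\<^sup>2 + 4 * k * (n - k))) / (2 * k)"

definition bnd :: "real \<Rightarrow> real \<Rightarrow> real \<Rightarrow> real" where
  "bnd n k H = n * (k - 1) / k + n * (k - 1) * H / (2 * k\<^sup>2) * (n * H + sqrt (n\<^sup>2 * H\<^sup>2 + 4 * k * (n - k)))"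

definition Eset :: "(real^'n \<Rightarrow> real^'n \<Rightarrow> real^'m) \<Rightarrow> real^'m \<Rightarrow> (real^'n) set" where
  "Eset \<alpha> \<eta> = {X. \<forall>Y. \<alpha> X Y = (X \<bullet> Y) *\<^sub>R \<eta>}"

definition dupin_normal :: "(real^'n \<Rightarrow> real^'n \<Rightarrow> real^'m) \<Rightarrow> real^'m \<Rightarrow> bool" where
  "dupin_normal \<alpha> \<eta> \<longleftrightarrow> dim (Eset \<alpha> \<eta>) \<ge> 2"

definition onb :: "(nat \<Rightarrow> real^'n) \<Rightarrow> bool" where
  "onb e \<longleftrightarrow> (\<forall>i\<in>{1..CARD('n)}. \<forall>j\<in>{1..CARD('n)}. e i \<bullet> e j = (if i = j then 1 else 0))"

definition lhs :: "(real^'n \<Rightarrow> real^'n \<Rightarrow> real^'m) \<Rightarrow> (nat \<Rightarrow> real^'n) \<Rightarrow> nat \<Rightarrow> real" where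
  "lhs \<alpha> e p = (\<Sum>i\<in>{1..p}. \<Sum>j\<in>{p+1..CARD('n)}.
      2 * (norm (\<alpha> (e i) (e j)))\<^sup>2 - \<alpha> (e i) (e i) \<bullet> \<alpha> (e j) (e j))"

end

theory Submission
  imports Defs
begin

(* By the Gauss equation, Ric(e_i) = n - 1 + n <a_i, H> - |a_i|^2 - sum_{j <> i} |alpha(e_i, e_j)|^2
   with a_i = alpha(e_i, e_i).  Summing Ric >= b over a frame bounds n H by 2 lambda, and then
   Ric(e_i) >= b bounds |a_i| by lambda.  For p <= k the left-hand side of (#) equals p (n - p)
   minus a sum of nonnegative terms: p (k - p)(1 + lambda^2), the Ricci excesses Ric(e_i) - b,
   the off-diagonal part of alpha on span{e_1..e_p}, the "defects" n (H lambda - <a_i, H>)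
   + (p - 2)(lambda^2 - |a_i|^2), and the spread of the a_i.  Equality forces all of them to
   vanish, i.e. p = k and alpha is umbilical along span{e_1..e_k} with a normal of length lambda.
   When H = 0 and k = 2 the defect vanishes identically, and Ric = b on the plane comes instead
   from the fact that the Ricci quadratic form attains its minimum b at e_1 and e_2. *)

lemma lam_quadratic:
  fixes n k H :: real
  assumes "0 < k" "k \<le> n"
  shows "k * (lam n k H)\<^sup>2 - n * H * lam n k H = n - k"
proof -
  define q where "q = sqrt (n\<^sup>2 * H\<^sup>2 + 4 * k * (n - k))"
  have q2: "q\<^sup>2 = n\<^sup>2 * H\<^sup>2 + 4 * k * (n - k)"
    unfolding q_def using assms by (intro real_sqrt_pow2) (simp add: add_nonneg_nonneg)
  have "k * (lam n k H)\<^sup>2 - n * H * lam n k H = ((n * H + q)\<^sup>2 - 2 * n * H * (n * H + q)) / (4 * k)"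
    using assms unfolding lam_def q_def[symmetric] by (simp add: field_simps power2_eq_square)
  also have "\<dots> = (q\<^sup>2 - n\<^sup>2 * H\<^sup>2) / (4 * k)" by (simp add: power2_eq_square algebra_simps)
  finally show ?thesis using q2 assms by simp
qed

lemma less_lam:
  fixes n k H :: real
  assumes "0 < k" "k < n" "0 \<le> H"
  shows "H < lam n k H"
proof -
  have "n * H < sqrt (n\<^sup>2 * H\<^sup>2 + 4 * k * (n - k))"
    using assms by (intro real_less_rsqrt) (simp add: power_mult_distrib)
  moreover have "k * H \<le> n * H" using assms by (simp add: mult_right_mono)
  ultimately show ?thesis using assms unfolding lam_def by (simp add: field_simps)
qed

lemma bnd_lam:
  fixes n k H :: real
  assumes "0 < k" "k \<le> n"
  shows "bnd n k H = n - 1 - (lam n k H)\<^sup>2 + n * H * lam n k H"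
proof -
  let ?l = "lam n k H"
  have "k * bnd n k H = n * (k - 1) + (k - 1) * n * H * ?l"
    using assms unfolding bnd_def lam_def by (simp add: field_simps power2_eq_square)
  also have "\<dots> = k * n - k - (k * ?l\<^sup>2 - n * H * ?l) - n * H * ?l + k * n * H * ?l"
    using lam_quadratic[OF assms, of H] by (simp add: algebra_simps)
  also have "\<dots> = k * (n - 1 - ?l\<^sup>2 + n * H * ?l)" by (simp add: algebra_simps)
  finally show ?thesis using assms by simp
qed

lemma quadratic_le_imp_le:
  fixes s l u :: real
  assumes "0 \<le> s" "u \<le> 2 * l" "s\<^sup>2 - u * s \<le> l\<^sup>2 - u * l"
  shows "s \<le> l"
proof (rule ccontr)
  assume "\<not> s \<le> l"
  then have "0 < (s - l) * (s + l - u)" using assms by simp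
  also have "\<dots> = (s\<^sup>2 - u * s) - (l\<^sup>2 - u * l)" by (simp add: power2_eq_square algebra_simps)
  finally show False using assms(3) by simp
qed

lemma le_double_of_quadratic_le:
  fixes n H l :: real
  assumes "2 \<le> n" "0 \<le> H" "H < l" "n * H * l - l\<^sup>2 \<le> (n - 1) * H\<^sup>2"
  shows "n * H \<le> 2 * l"
proof -
  have "0 \<le> (l - H) * (l - (n - 1) * H)"
    using assms(4) by (simp add: power2_eq_square algebra_simps)
  then have "(n - 1) * H \<le> l" using assms(3) by (simp add: zero_le_mult_iff)
  moreover have "n * H \<le> 2 * ((n - 1) * H)" using assms(1,2) mult_left_mono[of 2 n H] by (simp add: algebra_simps)
  ultimately show ?thesis by linarith
qed

lemma lam_sq_bound:
  fixes n k H :: real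
  assumes "2 \<le> k" "2 * k \<le> n" "0 \<le> H" "n * H \<le> 2 * lam n k H"
  shows "2 * (lam n k H)\<^sup>2 - 2 * n * H * lam n k H + (n * H)\<^sup>2 / 4 < n - 1"
proof -
  define l u where "l = lam n k H" and "u = n * H"
  have u: "0 \<le> u" "u \<le> 2 * l" using assms unfolding l_def u_def by simp_all
  have "k * u\<^sup>2 / 4 \<le> k * (2 * l * u) / 4"
    using u assms(1) mult_right_mono[of u "2 * l" u] by (simp add: power2_eq_square)
  also have "\<dots> \<le> 2 * (k - 1) * u * l"
    using u assms(1) mult_right_mono[of "k / 2" "2 * (k - 1)" "u * l"] by (simp add: algebra_simps)
  finally have "k * u\<^sup>2 / 4 \<le> 2 * (k - 1) * u * l" .
  moreover have "k * l\<^sup>2 - u * l = n - k"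
    using lam_quadratic[of k n H] assms unfolding l_def u_def by simp
  moreover have "0 \<le> (k - 2) * n" using assms by simp
  ultimately have "k * (2 * l\<^sup>2 - 2 * u * l + u\<^sup>2 / 4) < k * (n - 1)"
    using assms(1) by (simp add: algebra_simps)
  then show ?thesis using assms(1) unfolding l_def u_def by simp
qed

lemma sum_norm_diff_sq:
  fixes a :: "'i \<Rightarrow> 'a::real_inner"
  shows "(\<Sum>i\<in>P. \<Sum>j\<in>P. (norm (a i - a j))\<^sup>2)
    = 2 * (real (card P) * (\<Sum>i\<in>P. (norm (a i))\<^sup>2) - (norm (\<Sum>i\<in>P. a i))\<^sup>2)"
proof -
  have "(\<Sum>i\<in>P. \<Sum>j\<in>P. (norm (a i - a j))\<^sup>2)
      = (\<Sum>i\<in>P. \<Sum>j\<in>P. (norm (a i))\<^sup>2 + (norm (a j))\<^sup>2 - 2 * (a i \<bullet> a j))"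
    by (simp add: power2_norm_eq_inner inner_diff_left inner_diff_right inner_commute)
  also have "\<dots> = 2 * (real (card P) * (\<Sum>i\<in>P. (norm (a i))\<^sup>2)) - 2 * (\<Sum>i\<in>P. \<Sum>j\<in>P. a i \<bullet> a j)"
    by (simp only: sum.distrib sum_subtractf sum_distrib_left[symmetric])
       (simp add: sum_distrib_left[symmetric] mult.commute)
  also have "(\<Sum>i\<in>P. \<Sum>j\<in>P. a i \<bullet> a j) = (norm (\<Sum>i\<in>P. a i))\<^sup>2"
    unfolding power2_norm_eq_inner inner_sum_left inner_sum_right by (rule sum.swap)
  finally show ?thesis by simp
qed

lemma norm_sum_sq_le:
  fixes a :: "'i \<Rightarrow> 'a::real_inner"
  shows "(norm (\<Sum>i\<in>P. a i))\<^sup>2 \<le> real (card P) * (\<Sum>i\<in>P. (norm (a i))\<^sup>2)"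
  using sum_norm_diff_sq[of a P] sum_nonneg[of P "\<lambda>i. \<Sum>j\<in>P. (norm (a i - a j))\<^sup>2"]
  by (simp add: sum_nonneg)

lemma in_span_pairE:
  assumes "X \<in> span {a, b}"
  obtains x y where "X = x *\<^sub>R a + y *\<^sub>R b"
proof -
  obtain x where "X - x *\<^sub>R a \<in> span {b}" using assms span_breakdown_eq by blast
  then obtain y where "X - x *\<^sub>R a = y *\<^sub>R b" using span_singleton by blast
  then show ?thesis using that[of x y] by (simp add: algebra_simps)
qed

locale orthonormal_frame =
  fixes e :: "nat \<Rightarrow> real^'n"
  assumes onb: "onb e"
begin

lemma frame_inner:
  "i \<in> {1..CARD('n)} \<Longrightarrow> j \<in> {1..CARD('n)} \<Longrightarrow> e i \<bullet> e j = (if i = j then 1 else 0)"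
  using onb unfolding onb_def by blast

lemma norm_frame: "i \<in> {1..CARD('n)} \<Longrightarrow> norm (e i) = 1"
  using frame_inner[of i i] by (simp add: norm_eq_sqrt_inner)

lemma span_frame: "span (e ` {1..CARD('n)}) = UNIV"
proof -
  have inj: "inj_on e {1..CARD('n)}"
    by (rule inj_onI) (metis frame_inner zero_neq_one)
  have "independent (e ` {1..CARD('n)})"
  proof (rule pairwise_orthogonal_independent)
    show "pairwise orthogonal (e ` {1..CARD('n)})"
      unfolding pairwise_def orthogonal_def using frame_inner by auto
    show "0 \<notin> e ` {1..CARD('n)}" using norm_frame by fastforce
  qed
  moreover have "card (e ` {1..CARD('n)}) = CARD('n)" using card_image[OF inj] by simp
  ultimately have "UNIV \<subseteq> span (e ` {1..CARD('n)})"
    using card_ge_dim_independent[of "e ` {1..CARD('n)}" UNIV] by simp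
  then show ?thesis by auto
qed

lemma frame_expansion: "x = (\<Sum>i\<in>{1..CARD('n)}. (x \<bullet> e i) *\<^sub>R e i)"
proof -
  define d where "d = x - (\<Sum>i\<in>{1..CARD('n)}. (x \<bullet> e i) *\<^sub>R e i)"
  have orth: "d \<bullet> e j = 0" if "j \<in> {1..CARD('n)}" for j
  proof -
    have "(\<Sum>i\<in>{1..CARD('n)}. (x \<bullet> e i) *\<^sub>R e i) \<bullet> e j
        = (\<Sum>i\<in>{1..CARD('n)}. if i = j then x \<bullet> e j else 0)"
      unfolding inner_sum_left by (rule sum.cong) (use that frame_inner in auto)
    then show ?thesis using that unfolding d_def by (simp add: inner_diff_left)
  qed
  have "orthogonal d d"
    by (rule orthogonal_to_span[of _ "e ` {1..CARD('n)}"]) (use span_frame orth in \<open>auto simp: orthogonal_def\<close>)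
  then show ?thesis unfolding d_def by (simp add: orthogonal_def)
qed

lemma frame_parseval: "(\<Sum>i\<in>{1..CARD('n)}. (x \<bullet> e i) * (y \<bullet> e i)) = x \<bullet> y"
proof -
  have "x \<bullet> y = x \<bullet> (\<Sum>i\<in>{1..CARD('n)}. (y \<bullet> e i) *\<^sub>R e i)" using frame_expansion[of y] by simp
  then show ?thesis by (simp add: inner_sum_right mult.commute)
qed

lemma frame_trace:
  fixes f :: "real^'n \<Rightarrow> real^'n \<Rightarrow> 'a::real_vector"
  assumes "\<And>Y. linear (\<lambda>X. f X Y)" and "\<And>X. linear (f X)"
  shows "(\<Sum>b\<in>Basis. f b b) = (\<Sum>i\<in>{1..CARD('n)}. f (e i) (e i))"
proof -
  have "(\<Sum>b\<in>Basis. f b b) = (\<Sum>b\<in>Basis. \<Sum>i\<in>{1..CARD('n)}. (b \<bullet> e i) *\<^sub>R f (e i) b)"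
  proof (rule sum.cong[OF refl])
    fix b :: "real^'n"
    have "f b b = f (\<Sum>i\<in>{1..CARD('n)}. (b \<bullet> e i) *\<^sub>R e i) b" using frame_expansion[of b] by simp
    then show "f b b = (\<Sum>i\<in>{1..CARD('n)}. (b \<bullet> e i) *\<^sub>R f (e i) b)"
      by (simp add: linear_sum[OF assms(1)] linear_scale[OF assms(1)])
  qed
  also have "\<dots> = (\<Sum>i\<in>{1..CARD('n)}. f (e i) (\<Sum>b\<in>Basis. (e i \<bullet> b) *\<^sub>R b))"
    by (subst sum.swap) (simp add: linear_sum[OF assms(2)] linear_scale[OF assms(2)] inner_commute)
  finally show ?thesis by (simp add: euclidean_representation)
qed

end

definition ricci_form :: "(real^'n \<Rightarrow> real^'n \<Rightarrow> real^'m) \<Rightarrow> real^'n \<Rightarrow> real^'n \<Rightarrow> real" where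
  "ricci_form \<alpha> X Y = (\<Sum>b\<in>Basis. gauss_R \<alpha> b X Y b)"

lemma Ric_eq_ricci_form: "Ric \<alpha> X = ricci_form \<alpha> X X"
  unfolding Ric_def ricci_form_def ..

locale second_fundamental_form =
  fixes \<alpha> :: "real^'n \<Rightarrow> real^'n \<Rightarrow> real^'m"
  assumes sff: "sff \<alpha>"
begin

lemma linear_left: "linear (\<lambda>X. \<alpha> X Y)" and linear_right: "linear (\<alpha> X)"
  and symmetric: "\<alpha> X Y = \<alpha> Y X"
  using sff unfolding sff_def by blast+

lemma add_left: "\<alpha> (X + Z) Y = \<alpha> X Y + \<alpha> Z Y"
  and add_right: "\<alpha> X (Y + Z) = \<alpha> X Y + \<alpha> X Z"
  and scale_left: "\<alpha> (c *\<^sub>R X) Y = c *\<^sub>R \<alpha> X Y"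
  and scale_right: "\<alpha> X (c *\<^sub>R Y) = c *\<^sub>R \<alpha> X Y"
  and sum_right: "\<alpha> X (sum f S) = (\<Sum>i\<in>S. \<alpha> X (f i))"
  using linear_add[OF linear_left] linear_add[OF linear_right]
    linear_scale[OF linear_left] linear_scale[OF linear_right] linear_sum[OF linear_right]
  by blast+

lemma trace_eq_meanvec: "(\<Sum>b\<in>Basis. \<alpha> b b) = real CARD('n) *\<^sub>R meanvec \<alpha>"
  unfolding meanvec_def by simp

lemma subspace_Eset: "subspace (Eset \<alpha> \<eta>)"
  unfolding subspace_def Eset_def
  by (simp add: add_left scale_left inner_add_left scaleR_add_left linear_0[OF linear_left])

lemma umbilic_on_span:
  assumes "\<forall>X\<in>S. \<forall>Y\<in>S. \<alpha> X Y = (X \<bullet> Y) *\<^sub>R \<eta>"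
  shows "\<forall>X\<in>span S. \<forall>Y\<in>span S. \<alpha> X Y = (X \<bullet> Y) *\<^sub>R \<eta>"
proof -
  have sub: "subspace {X. \<alpha> X Y = (X \<bullet> Y) *\<^sub>R \<eta>}" for Y
    unfolding subspace_def
    by (simp add: add_left scale_left inner_add_left scaleR_add_left linear_0[OF linear_left])
  have "\<alpha> X Y = (X \<bullet> Y) *\<^sub>R \<eta>" if "X \<in> S" "Y \<in> span S" for X Y
  proof -
    have "span S \<subseteq> {Y. \<alpha> Y X = (Y \<bullet> X) *\<^sub>R \<eta>}"
      using assms that(1) by (intro span_minimal[OF _ sub]) (auto simp: symmetric inner_commute)
    then show ?thesis using that(2) by (auto simp: symmetric inner_commute)
  qed
  then have "span S \<subseteq> {X. \<alpha> X Y = (X \<bullet> Y) *\<^sub>R \<eta>}" if "Y \<in> span S" for Y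
    using that by (intro span_minimal[OF _ sub]) auto
  then show ?thesis by blast
qed

lemma Ric_Eset:
  assumes "X \<in> Eset \<alpha> \<eta>" "norm X = 1"
  shows "Ric \<alpha> X = real CARD('n) - 1 + real CARD('n) * (\<eta> \<bullet> meanvec \<alpha>) - (norm \<eta>)\<^sup>2"
proof -
  have umb: "\<alpha> X Y = (X \<bullet> Y) *\<^sub>R \<eta>" "\<alpha> Y X = (X \<bullet> Y) *\<^sub>R \<eta>" for Y
    using assms(1) symmetric unfolding Eset_def by auto
  have XX: "X \<bullet> X = 1" using assms(2) by (simp add: norm_eq_1)
  have "Ric \<alpha> X = (\<Sum>b\<in>Basis. 1 - (X \<bullet> b)\<^sup>2 + \<alpha> b b \<bullet> \<eta> - (X \<bullet> b)\<^sup>2 * (\<eta> \<bullet> \<eta>))"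
    unfolding Ric_def gauss_R_def umb XX
    by (intro sum.cong) (auto simp: inner_commute power2_eq_square)
  also have "\<dots> = real CARD('n) - X \<bullet> X + (\<Sum>b\<in>Basis. \<alpha> b b) \<bullet> \<eta> - (X \<bullet> X) * (\<eta> \<bullet> \<eta>)"
    by (simp add: sum.distrib sum_subtractf inner_sum_left sum_distrib_right[symmetric]
        euclidean_inner[of X X] power2_eq_square)
  finally show ?thesis
    by (simp add: XX trace_eq_meanvec inner_commute power2_norm_eq_inner)
qed

lemma ricci_form_commute: "ricci_form \<alpha> X Y = ricci_form \<alpha> Y X"
  unfolding ricci_form_def
proof (intro sum.cong refl)
  fix b
  show "gauss_R \<alpha> b X Y b = gauss_R \<alpha> b Y X b"
    unfolding gauss_R_def symmetric[of X b] symmetric[of Y b] symmetric[of Y X]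
    by (simp add: inner_commute)
qed

lemma ricci_form_linear_left:
  "ricci_form \<alpha> (x *\<^sub>R X + y *\<^sub>R Y) Z = x * ricci_form \<alpha> X Z + y * ricci_form \<alpha> Y Z"
  unfolding ricci_form_def gauss_R_def sum_distrib_left sum.distrib[symmetric]
  by (intro sum.cong refl) (simp add: add_left scale_left inner_add_left algebra_simps)

lemma Ric_add_scaled:
  "Ric \<alpha> (x *\<^sub>R X + y *\<^sub>R Y) = x\<^sup>2 * Ric \<alpha> X + 2 * x * y * ricci_form \<alpha> X Y + y\<^sup>2 * Ric \<alpha> Y"
proof -
  have "ricci_form \<alpha> Z (x *\<^sub>R X + y *\<^sub>R Y) = x * ricci_form \<alpha> Z X + y * ricci_form \<alpha> Z Y" for Z
    using ricci_form_linear_left ricci_form_commute by metis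
  then show ?thesis
    unfolding Ric_eq_ricci_form ricci_form_linear_left
    using ricci_form_commute[of Y X] by (simp add: power2_eq_square algebra_simps)
qed

lemma Ric_constant_on_circle:
  assumes "X \<bullet> X = 1" "Y \<bullet> Y = 1" "X \<bullet> Y = 0" "Ric \<alpha> X = c" "Ric \<alpha> Y = c"
    and min: "\<forall>Z. norm Z = 1 \<longrightarrow> c \<le> Ric \<alpha> Z"
  shows "Ric \<alpha> (x *\<^sub>R X + y *\<^sub>R Y) = (x\<^sup>2 + y\<^sup>2) * c"
proof -
  define r where "r = 1 / sqrt 2"
  have r2: "r\<^sup>2 = 1 / 2" unfolding r_def by (simp add: power_divide)
  have "(r *\<^sub>R X + t *\<^sub>R Y) \<bullet> (r *\<^sub>R X + t *\<^sub>R Y) = r\<^sup>2 + t\<^sup>2" for t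
    using assms(1-3) by (simp add: inner_add_left inner_add_right inner_commute power2_eq_square)
  then have "c \<le> Ric \<alpha> (r *\<^sub>R X + t *\<^sub>R Y)" if "t\<^sup>2 = 1 / 2" for t
    using min that r2 by (simp add: norm_eq_1)
  from this[of r] this[of "- r"] have "ricci_form \<alpha> X Y = 0"
    using r2 unfolding Ric_add_scaled assms(4,5) by (simp add: power2_eq_square algebra_simps)
  then show ?thesis unfolding Ric_add_scaled assms(4,5) by (simp add: algebra_simps)
qed

end

locale sff_frame = second_fundamental_form \<alpha> + orthonormal_frame e
  for \<alpha> :: "real^'n \<Rightarrow> real^'n \<Rightarrow> real^'m" and e :: "nat \<Rightarrow> real^'n"
begin

abbreviation diag :: "nat \<Rightarrow> real^'m" where "diag i \<equiv> \<alpha> (e i) (e i)"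

definition off_diag :: "nat \<Rightarrow> nat \<Rightarrow> real" where
  "off_diag p i = (\<Sum>j\<in>{1..p} - {i}. (norm (\<alpha> (e i) (e j)))\<^sup>2)"

lemma off_diag_nonneg: "0 \<le> off_diag p i"
  unfolding off_diag_def by (intro sum_nonneg) simp

lemma off_diag_eq_0_iff: "off_diag p i = 0 \<longleftrightarrow> (\<forall>j\<in>{1..p} - {i}. \<alpha> (e i) (e j) = 0)"
  unfolding off_diag_def by (subst sum_nonneg_eq_0_iff) auto

lemma sum_diag: "(\<Sum>i\<in>{1..CARD('n)}. diag i) = real CARD('n) *\<^sub>R meanvec \<alpha>"
  using frame_trace[OF linear_left linear_right] trace_eq_meanvec by simp

lemma Ric_frame:
  "Ric \<alpha> X = (real CARD('n) - 1) * (X \<bullet> X) + real CARD('n) * (\<alpha> X X \<bullet> meanvec \<alpha>)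
     - (\<Sum>i\<in>{1..CARD('n)}. (norm (\<alpha> X (e i)))\<^sup>2)"
proof -
  have "Ric \<alpha> X = (\<Sum>i\<in>{1..CARD('n)}. gauss_R \<alpha> (e i) X X (e i))"
    unfolding Ric_def
  proof (rule frame_trace[of "\<lambda>u v. gauss_R \<alpha> u X X v"])
    show "linear (\<lambda>u. gauss_R \<alpha> u X X v)" "linear (gauss_R \<alpha> v X X)" for v
      unfolding gauss_R_def
      by (intro linearI; simp add: add_left add_right scale_left scale_right
          inner_add_left inner_add_right algebra_simps)+
  qed
  also have "\<dots> = (\<Sum>i\<in>{1..CARD('n)}. X \<bullet> X - (X \<bullet> e i) * (X \<bullet> e i) + diag i \<bullet> \<alpha> X X
      - (norm (\<alpha> X (e i)))\<^sup>2)"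
  proof (intro sum.cong refl)
    fix i assume "i \<in> {1..CARD('n)}"
    then show "gauss_R \<alpha> (e i) X X (e i) = X \<bullet> X - (X \<bullet> e i) * (X \<bullet> e i) + diag i \<bullet> \<alpha> X X
      - (norm (\<alpha> X (e i)))\<^sup>2"
      unfolding gauss_R_def symmetric[of "e i" X]
      by (simp add: frame_inner inner_commute power2_norm_eq_inner)
  qed
  also have "(\<Sum>i\<in>{1..CARD('n)}. diag i \<bullet> \<alpha> X X) = real CARD('n) * (\<alpha> X X \<bullet> meanvec \<alpha>)"
    unfolding inner_sum_left[symmetric] sum_diag by (simp add: inner_commute)
  ultimately show ?thesis
    using frame_parseval[of X X] by (simp add: sum.distrib sum_subtractf algebra_simps)
qed

lemma Ric_frame_vector:
  assumes "i \<in> {1..CARD('n)}"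
  shows "Ric \<alpha> (e i) = real CARD('n) - 1 + real CARD('n) * (diag i \<bullet> meanvec \<alpha>)
    - (norm (diag i))\<^sup>2 - off_diag (CARD('n)) i"
proof -
  have "(\<Sum>j\<in>{1..CARD('n)}. (norm (\<alpha> (e i) (e j)))\<^sup>2) = (norm (diag i))\<^sup>2 + off_diag (CARD('n)) i"
    unfolding off_diag_def using assms by (subst sum.remove[of _ i]) auto
  then show ?thesis using Ric_frame[of "e i"] frame_inner[OF assms assms] by simp
qed

lemma lhs_frame:
  assumes "p \<le> CARD('n)"
  shows "lhs \<alpha> e p = (\<Sum>i\<in>{1..p}. 2 * (real CARD('n) - 1) - 2 * Ric \<alpha> (e i)
      + real CARD('n) * (diag i \<bullet> meanvec \<alpha>) - 2 * (norm (diag i))\<^sup>2 - 2 * off_diag p i)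
    + (norm (\<Sum>i\<in>{1..p}. diag i))\<^sup>2"
    (is "_ = (\<Sum>i\<in>{1..p}. ?t i) + _")
proof -
  let ?A = "\<Sum>i\<in>{1..p}. diag i"
  have upper: "{1..CARD('n)} = {1..p} \<union> {p+1..CARD('n)}" using assms by auto
  have "(\<Sum>j\<in>{p+1..CARD('n)}. 2 * (norm (\<alpha> (e i) (e j)))\<^sup>2 - diag i \<bullet> diag j) = ?t i + diag i \<bullet> ?A"
    if i: "i \<in> {1..p}" for i
  proof -
    have split: "{1..CARD('n)} - {i} = ({1..p} - {i}) \<union> {p+1..CARD('n)}" using i assms by auto
    have "off_diag (CARD('n)) i = off_diag p i + (\<Sum>j\<in>{p+1..CARD('n)}. (norm (\<alpha> (e i) (e j)))\<^sup>2)"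
      unfolding off_diag_def split by (rule sum.union_disjoint) auto
    moreover have "real CARD('n) *\<^sub>R meanvec \<alpha> = ?A + (\<Sum>j\<in>{p+1..CARD('n)}. diag j)"
      unfolding sum_diag[symmetric] upper by (rule sum.union_disjoint) auto
    then have "real CARD('n) * (diag i \<bullet> meanvec \<alpha>)
        = diag i \<bullet> ?A + (\<Sum>j\<in>{p+1..CARD('n)}. diag i \<bullet> diag j)"
      by (simp flip: inner_sum_right inner_add_right add: inner_scaleR_right[symmetric])
    ultimately show ?thesis
      using Ric_frame_vector[of i] i assms
      by (simp add: sum_subtractf sum_distrib_left[symmetric] algebra_simps)
  qed
  then have "lhs \<alpha> e p = (\<Sum>i\<in>{1..p}. ?t i + diag i \<bullet> ?A)"
    unfolding lhs_def by (intro sum.cong) auto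
  also have "\<dots> = (\<Sum>i\<in>{1..p}. ?t i) + (norm ?A)\<^sup>2"
    by (simp only: sum.distrib inner_sum_left[symmetric] power2_norm_eq_inner)
  finally show ?thesis .
qed

lemma umbilic_block_iff:
  assumes "1 \<le> p" "p \<le> CARD('n)"
  shows "(\<forall>i\<in>{1..p}. off_diag p i = 0) \<and> (\<forall>i\<in>{1..p}. \<forall>j\<in>{1..p}. diag i = diag j)
    \<longleftrightarrow> (\<forall>i\<in>{1..p}. \<forall>j\<in>{1..p}. \<alpha> (e i) (e j) = (e i \<bullet> e j) *\<^sub>R diag 1)"
proof -
  have sub: "{1..p} \<subseteq> {1..CARD('n)}" using assms(2) by auto
  show ?thesis
    unfolding off_diag_eq_0_iff
  proof (intro iffI ballI; (elim conjE)?)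
    fix i j assume off: "\<forall>i\<in>{1..p}. \<forall>j\<in>{1..p} - {i}. \<alpha> (e i) (e j) = 0"
      and eq: "\<forall>i\<in>{1..p}. \<forall>j\<in>{1..p}. diag i = diag j" and ij: "i \<in> {1..p}" "j \<in> {1..p}"
    show "\<alpha> (e i) (e j) = (e i \<bullet> e j) *\<^sub>R diag 1"
    proof (cases "i = j")
      case True
      then show ?thesis using eq[rule_format, of i 1] ij assms(1) sub frame_inner[of i i] by auto
    next
      case False
      then show ?thesis using off[rule_format, of i j] ij sub frame_inner[of i j] by auto
    qed
  next
    assume umb: "\<forall>i\<in>{1..p}. \<forall>j\<in>{1..p}. \<alpha> (e i) (e j) = (e i \<bullet> e j) *\<^sub>R diag 1"
    have "\<alpha> (e i) (e j) = (if i = j then diag 1 else 0)" if "i \<in> {1..p}" "j \<in> {1..p}" for i j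
      using umb[rule_format, OF that] that sub frame_inner[of i j] by auto
    then show "(\<forall>i\<in>{1..p}. \<forall>j\<in>{1..p} - {i}. \<alpha> (e i) (e j) = 0) \<and>
        (\<forall>i\<in>{1..p}. \<forall>j\<in>{1..p}. diag i = diag j)"
      by (metis DiffD1 DiffD2 singletonI)
  qed
qed

lemma frame_vector_in_Eset:
  assumes "i \<in> {1..CARD('n)}" "off_diag (CARD('n)) i = 0"
  shows "e i \<in> Eset \<alpha> (diag i)"
  unfolding Eset_def
proof (intro CollectI allI)
  fix Y
  have "\<alpha> (e i) Y = (\<Sum>j\<in>{1..CARD('n)}. (Y \<bullet> e j) *\<^sub>R \<alpha> (e i) (e j))"
    by (subst frame_expansion[of Y]) (simp add: sum_right scale_right)
  also have "\<dots> = (\<Sum>j\<in>{1..CARD('n)}. if j = i then (Y \<bullet> e i) *\<^sub>R diag i else 0)"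
    using assms unfolding off_diag_eq_0_iff by (intro sum.cong) auto
  finally show "\<alpha> (e i) Y = (e i \<bullet> Y) *\<^sub>R diag i" using assms(1) by (simp add: inner_commute)
qed

lemma dupin_normal_of_frame_span:
  assumes "2 \<le> p" "p \<le> CARD('n)" "span (e ` {1..p}) \<subseteq> Eset \<alpha> \<eta>"
  shows "dupin_normal \<alpha> \<eta>"
proof -
  have "pairwise orthogonal {e 1, e 2}" "0 \<notin> {e 1, e 2}"
    using assms frame_inner[of 1 2] norm_frame[of 1] norm_frame[of 2]
    by (auto simp: pairwise_def orthogonal_def inner_commute)
  then have "independent {e 1, e 2}" by (rule pairwise_orthogonal_independent)
  moreover have "e 1 \<noteq> e 2" using assms frame_inner[of 1 2] norm_frame[of 1] by auto
  moreover have "{e 1, e 2} \<subseteq> Eset \<alpha> \<eta>"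
    using assms by (auto intro!: subsetD[OF assms(3)] span_base)
  ultimately have "card {e 1, e 2} \<le> dim (Eset \<alpha> \<eta>)"
    using independent_card_le_dim by blast
  then show ?thesis unfolding dupin_normal_def using \<open>e 1 \<noteq> e 2\<close> by simp
qed

end

locale ricci_pinched = sff_frame \<alpha> e
  for \<alpha> :: "real^'n \<Rightarrow> real^'n \<Rightarrow> real^'m" and e :: "nat \<Rightarrow> real^'n" +
  fixes k :: nat
  assumes two_le_k: "2 \<le> k" and double_k_le: "2 * k \<le> CARD('n)"
    and Ric_ge: "\<forall>X. norm X = 1 \<longrightarrow> Ric \<alpha> X \<ge> bnd (real CARD('n)) (real k) (meancurv \<alpha>)"
begin

abbreviation lamH :: real where "lamH \<equiv> lam (real CARD('n)) (real k) (meancurv \<alpha>)"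
abbreviation bndH :: real where "bndH \<equiv> bnd (real CARD('n)) (real k) (meancurv \<alpha>)"

lemma k_le_n: "k \<le> CARD('n)"
  using double_k_le by simp

lemma meancurv_less_lamH: "meancurv \<alpha> < lamH"
  using less_lam[of "real k" "real CARD('n)" "meancurv \<alpha>"] two_le_k double_k_le
  by (simp add: meancurv_def)

lemma lamH_pos: "0 < lamH"
  using meancurv_less_lamH norm_ge_zero[of "meanvec \<alpha>"] unfolding meancurv_def by linarith

lemma lamH_quadratic:
  "real k * lamH\<^sup>2 - real CARD('n) * meancurv \<alpha> * lamH = real CARD('n) - real k"
  using lam_quadratic two_le_k k_le_n by simp

lemma bndH_eq: "bndH = real CARD('n) - 1 - lamH\<^sup>2 + real CARD('n) * meancurv \<alpha> * lamH"
  using bnd_lam two_le_k k_le_n by simp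

lemma Ric_frame_ge: "i \<in> {1..CARD('n)} \<Longrightarrow> bndH \<le> Ric \<alpha> (e i)"
  using Ric_ge norm_frame by blast

lemma diag_inner_meanvec_le: "diag i \<bullet> meanvec \<alpha> \<le> norm (diag i) * meancurv \<alpha>"
  unfolding meancurv_def by (rule norm_cauchy_schwarz)

(* Summing the Ricci bound over the frame: a lower bound on the scalar curvature. *)
lemma trace_le_double_lamH: "real CARD('n) * meancurv \<alpha> \<le> 2 * lamH"
proof -
  define n H where "n = real CARD('n)" and "H = meancurv \<alpha>"
  have "(\<Sum>i\<in>{1..CARD('n)}. bndH) \<le> (\<Sum>i\<in>{1..CARD('n)}. Ric \<alpha> (e i))"
    by (rule sum_mono) (rule Ric_frame_ge)
  then have "n * bndH \<le> (\<Sum>i\<in>{1..CARD('n)}. Ric \<alpha> (e i))" unfolding n_def by simp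
  also have "\<dots> \<le> (\<Sum>i\<in>{1..CARD('n)}. n - 1 + n * (diag i \<bullet> meanvec \<alpha>) - (norm (diag i))\<^sup>2)"
    using Ric_frame_vector off_diag_nonneg unfolding n_def by (intro sum_mono) fastforce
  also have "\<dots> = n * (n - 1) + n * ((\<Sum>i\<in>{1..CARD('n)}. diag i) \<bullet> meanvec \<alpha>)
      - (\<Sum>i\<in>{1..CARD('n)}. (norm (diag i))\<^sup>2)"
    unfolding n_def by (simp add: sum.distrib sum_subtractf inner_sum_left sum_distrib_left)
  also have "\<dots> \<le> n * (n - 1) + n\<^sup>2 * H\<^sup>2 - n * H\<^sup>2"
  proof -
    have "(\<Sum>i\<in>{1..CARD('n)}. diag i) \<bullet> meanvec \<alpha> = n * H\<^sup>2"
      unfolding sum_diag n_def H_def meancurv_def by (simp add: dot_square_norm)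
    moreover have "n\<^sup>2 * H\<^sup>2 \<le> n * (\<Sum>i\<in>{1..CARD('n)}. (norm (diag i))\<^sup>2)"
      using norm_sum_sq_le[of diag "{1..CARD('n)}"]
      unfolding sum_diag n_def H_def meancurv_def by (simp add: power_mult_distrib)
    then have "n * H\<^sup>2 \<le> (\<Sum>i\<in>{1..CARD('n)}. (norm (diag i))\<^sup>2)"
      unfolding n_def by (simp add: power2_eq_square)
    ultimately show ?thesis by (simp add: power2_eq_square)
  qed
  finally have "n * (bndH - (n - 1) - (n - 1) * H\<^sup>2) \<le> 0"
    by (simp add: power2_eq_square algebra_simps)
  then have "bndH \<le> (n - 1) + (n - 1) * H\<^sup>2"
    unfolding n_def by (simp add: mult_le_0_iff)
  moreover have "bndH = n - 1 - lamH\<^sup>2 + n * H * lamH" unfolding n_def H_def by (rule bndH_eq)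
  ultimately have "n * H * lamH - lamH\<^sup>2 \<le> (n - 1) * H\<^sup>2" by simp
  then show ?thesis
    using le_double_of_quadratic_le[of n H lamH] meancurv_less_lamH two_le_k double_k_le
    unfolding n_def H_def meancurv_def by simp
qed

lemma norm_diag_le_lamH:
  assumes "i \<in> {1..CARD('n)}"
  shows "norm (diag i) \<le> lamH"
proof (rule quadratic_le_imp_le[OF norm_ge_zero trace_le_double_lamH])
  have "real CARD('n) * (diag i \<bullet> meanvec \<alpha>) \<le> real CARD('n) * meancurv \<alpha> * norm (diag i)"
    using mult_left_mono[OF diag_inner_meanvec_le, of "real CARD('n)"] by (simp add: ac_simps)
  then show "(norm (diag i))\<^sup>2 - real CARD('n) * meancurv \<alpha> * norm (diag i)
      \<le> lamH\<^sup>2 - real CARD('n) * meancurv \<alpha> * lamH"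
    using Ric_frame_ge[OF assms] Ric_frame_vector[OF assms] off_diag_nonneg[of "CARD('n)" i]
    unfolding bndH_eq by linarith
qed

definition defect :: "nat \<Rightarrow> nat \<Rightarrow> real" where
  "defect p i = real CARD('n) * (meancurv \<alpha> * lamH - diag i \<bullet> meanvec \<alpha>)
     + (real p - 2) * (lamH\<^sup>2 - (norm (diag i))\<^sup>2)"

lemma diag_inner_meanvec_le_lamH:
  assumes "i \<in> {1..CARD('n)}"
  shows "diag i \<bullet> meanvec \<alpha> \<le> meancurv \<alpha> * lamH"
proof -
  have "norm (diag i) * meancurv \<alpha> \<le> lamH * meancurv \<alpha>"
    using norm_diag_le_lamH[OF assms] by (simp add: meancurv_def mult_right_mono)
  then show ?thesis using diag_inner_meanvec_le[of i] by (simp add: mult.commute)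
qed

lemma defect_nonneg:
  assumes "2 \<le> p" "i \<in> {1..CARD('n)}"
  shows "0 \<le> defect p i"
proof -
  have "(norm (diag i))\<^sup>2 \<le> lamH\<^sup>2"
    using norm_diag_le_lamH[OF assms(2)] by (simp add: power_mono)
  then show ?thesis
    using assms diag_inner_meanvec_le_lamH[OF assms(2)] unfolding defect_def by simp
qed

lemma defect_eq_0_imp:
  assumes "k = 2 \<longrightarrow> meancurv \<alpha> \<noteq> 0" "i \<in> {1..CARD('n)}" "defect k i = 0"
  shows "norm (diag i) = lamH" and "diag i \<bullet> meanvec \<alpha> = meancurv \<alpha> * lamH"
proof -
  have "diag i \<bullet> meanvec \<alpha> \<le> meancurv \<alpha> * lamH" "(norm (diag i))\<^sup>2 \<le> lamH\<^sup>2"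
    using diag_inner_meanvec_le_lamH[OF assms(2)] norm_diag_le_lamH[OF assms(2)]
    by (simp_all add: power_mono)
  then have inner: "diag i \<bullet> meanvec \<alpha> = meancurv \<alpha> * lamH"
    and sq: "(real k - 2) * (lamH\<^sup>2 - (norm (diag i))\<^sup>2) = 0"
    using assms(3) two_le_k unfolding defect_def by (simp_all add: add_nonneg_eq_0_iff)
  then show "diag i \<bullet> meanvec \<alpha> = meancurv \<alpha> * lamH" by blast
  show "norm (diag i) = lamH"
  proof (cases "k = 2")
    case True
    then have "lamH * meancurv \<alpha> \<le> norm (diag i) * meancurv \<alpha>"
      using inner diag_inner_meanvec_le[of i] by (simp add: mult.commute)
    then show ?thesis using True assms(1) norm_diag_le_lamH[OF assms(2)]
      by (simp add: meancurv_def)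
  next
    case False
    then show ?thesis
      using sq two_le_k lamH_pos by (simp add: power2_eq_iff_nonneg)
  qed
qed

lemma lhs_decomposition:
  assumes "p \<le> CARD('n)"
  shows "lhs \<alpha> e p = real p * (real CARD('n) - real p) - real p * (real k - real p) * (1 + lamH\<^sup>2)
    - 2 * (\<Sum>i\<in>{1..p}. Ric \<alpha> (e i) - bndH) - 2 * (\<Sum>i\<in>{1..p}. off_diag p i)
    - (\<Sum>i\<in>{1..p}. defect p i) - (\<Sum>i\<in>{1..p}. \<Sum>j\<in>{1..p}. (norm (diag i - diag j))\<^sup>2) / 2"
proof -
  have summand: "2 * (real CARD('n) - 1) - 2 * Ric \<alpha> (e i) + real CARD('n) * (diag i \<bullet> meanvec \<alpha>)
      - 2 * (norm (diag i))\<^sup>2 - 2 * off_diag p i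
    = (real CARD('n) - real p) - (real k - real p) * (1 + lamH\<^sup>2) - 2 * (Ric \<alpha> (e i) - bndH)
      - 2 * off_diag p i - defect p i - real p * (norm (diag i))\<^sup>2" for i
    using lamH_quadratic unfolding defect_def bndH_eq by (simp add: algebra_simps)
  have "lhs \<alpha> e p = (\<Sum>i\<in>{1..p}. (real CARD('n) - real p) - (real k - real p) * (1 + lamH\<^sup>2)
      - 2 * (Ric \<alpha> (e i) - bndH) - 2 * off_diag p i - defect p i - real p * (norm (diag i))\<^sup>2)
      + (norm (\<Sum>i\<in>{1..p}. diag i))\<^sup>2"
    unfolding lhs_frame[OF assms] summand ..
  also have "\<dots> = real p * ((real CARD('n) - real p) - (real k - real p) * (1 + lamH\<^sup>2))
      - 2 * (\<Sum>i\<in>{1..p}. Ric \<alpha> (e i) - bndH) - 2 * (\<Sum>i\<in>{1..p}. off_diag p i)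
      - (\<Sum>i\<in>{1..p}. defect p i)
      - (real p * (\<Sum>i\<in>{1..p}. (norm (diag i))\<^sup>2) - (norm (\<Sum>i\<in>{1..p}. diag i))\<^sup>2)"
    by (simp add: sum_subtractf sum_distrib_left)
  finally show ?thesis
    using sum_norm_diff_sq[of diag "{1..p}"] by (simp add: algebra_simps)
qed

(* The decomposition is of no use for p = 1, where defect 1 i can be negative. *)
lemma lhs_one_less: "lhs \<alpha> e 1 < real CARD('n) - 1"
proof -
  let ?n = "real CARD('n)" and ?H = "meancurv \<alpha>" and ?a = "norm (diag 1)"
  have "?n * (diag 1 \<bullet> meanvec \<alpha>) \<le> ?n * ?H * ?a"
    using mult_left_mono[OF diag_inner_meanvec_le[of 1], of ?n] by (simp add: ac_simps)
  moreover have "lhs \<alpha> e 1 = 2 * (?n - 1) - 2 * Ric \<alpha> (e 1) + ?n * (diag 1 \<bullet> meanvec \<alpha>) - ?a\<^sup>2"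
    using lhs_frame[of 1] two_le_k k_le_n unfolding off_diag_def by simp
  moreover have "bndH \<le> Ric \<alpha> (e 1)" using Ric_frame_ge two_le_k k_le_n by simp
  ultimately have "lhs \<alpha> e 1 \<le> 2 * (?n - 1) - 2 * bndH + (?n * ?H * ?a - ?a\<^sup>2)" by linarith
  also have "\<dots> \<le> 2 * (?n - 1) - 2 * bndH + (?n * ?H)\<^sup>2 / 4"
    using zero_le_power2[of "?a - ?n * ?H / 2"] by (simp add: power2_eq_square algebra_simps)
  also have "\<dots> = 2 * lamH\<^sup>2 - 2 * ?n * ?H * lamH + (?n * ?H)\<^sup>2 / 4"
    unfolding bndH_eq by (simp add: algebra_simps)
  also have "\<dots> < ?n - 1"
    using lam_sq_bound[of "real k" ?n ?H] two_le_k double_k_le trace_le_double_lamH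
    by (simp add: meancurv_def)
  finally show ?thesis .
qed

lemma lhs_gap:
  assumes "2 \<le> p" "p \<le> k"
  shows "lhs \<alpha> e p + real p * (real k - real p) * (1 + lamH\<^sup>2) + 2 * (Ric \<alpha> (e 1) - bndH)
    \<le> real (p * (CARD('n) - p))"
proof -
  have sub: "{1..p} \<subseteq> {1..CARD('n)}" using assms k_le_n by auto
  have "Ric \<alpha> (e 1) - bndH \<le> (\<Sum>i\<in>{1..p}. Ric \<alpha> (e i) - bndH)"
    using assms Ric_frame_ge sub by (intro member_le_sum) auto
  moreover have "0 \<le> (\<Sum>i\<in>{1..p}. off_diag p i)" by (simp add: sum_nonneg off_diag_nonneg)
  moreover have "0 \<le> (\<Sum>i\<in>{1..p}. defect p i)"
    using defect_nonneg[OF assms(1)] sub by (intro sum_nonneg) auto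
  moreover have "0 \<le> (\<Sum>i\<in>{1..p}. \<Sum>j\<in>{1..p}. (norm (diag i - diag j))\<^sup>2)"
    by (simp add: sum_nonneg)
  ultimately show ?thesis
    using lhs_decomposition[of p] assms k_le_n by (simp add: of_nat_diff)
qed

lemma lhs_le:
  assumes "1 \<le> p" "p \<le> k"
  shows "lhs \<alpha> e p \<le> real (p * (CARD('n) - p))"
proof (cases "p = 1")
  case False
  then have p: "2 \<le> p" using assms by simp
  have "lhs \<alpha> e p \<le> lhs \<alpha> e p + real p * (real k - real p) * (1 + lamH\<^sup>2) + 2 * (Ric \<alpha> (e 1) - bndH)"
    using assms Ric_frame_ge[of 1] two_le_k k_le_n by simp
  also have "\<dots> \<le> real (p * (CARD('n) - p))" by (rule lhs_gap[OF p assms(2)])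
  finally show ?thesis .
qed (use lhs_one_less in simp)

lemma lhs_less:
  assumes "1 \<le> p" "p < k"
  shows "lhs \<alpha> e p < real (p * (CARD('n) - p))"
proof (cases "p = 1")
  case False
  then have p: "2 \<le> p" using assms by simp
  have "lhs \<alpha> e p < lhs \<alpha> e p + real p * (real k - real p) * (1 + lamH\<^sup>2) + 2 * (Ric \<alpha> (e 1) - bndH)"
    using assms Ric_frame_ge[of 1] two_le_k k_le_n by (simp add: add_pos_nonneg)
  also have "\<dots> \<le> real (p * (CARD('n) - p))" by (rule lhs_gap[OF p less_imp_le[OF assms(2)]])
  finally show ?thesis .
qed (use lhs_one_less in simp)

lemma lhs_less_of_Ric_gt:
  assumes "\<forall>X. norm X = 1 \<longrightarrow> Ric \<alpha> X > bndH"
  shows "lhs \<alpha> e k < real (k * (CARD('n) - k))"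
proof -
  have "bndH < Ric \<alpha> (e 1)" using assms norm_frame two_le_k k_le_n by simp
  then have "lhs \<alpha> e k < lhs \<alpha> e k + real k * (real k - real k) * (1 + lamH\<^sup>2) + 2 * (Ric \<alpha> (e 1) - bndH)"
    by simp
  also have "\<dots> \<le> real (k * (CARD('n) - k))" by (rule lhs_gap[OF two_le_k order_refl])
  finally show ?thesis .
qed

lemma lhs_eq_iff:
  "lhs \<alpha> e k = real (k * (CARD('n) - k)) \<longleftrightarrow>
    (\<forall>i\<in>{1..k}. Ric \<alpha> (e i) = bndH \<and> defect k i = 0 \<and>
      (\<forall>j\<in>{1..k}. \<alpha> (e i) (e j) = (e i \<bullet> e j) *\<^sub>R diag 1))"
proof -
  have sub: "{1..k} \<subseteq> {1..CARD('n)}" using k_le_n by auto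
  have R: "(\<Sum>i\<in>{1..k}. Ric \<alpha> (e i) - bndH) = 0 \<longleftrightarrow> (\<forall>i\<in>{1..k}. Ric \<alpha> (e i) = bndH)"
    using Ric_frame_ge sub by (subst sum_nonneg_eq_0_iff) force+
  have D: "(\<Sum>i\<in>{1..k}. off_diag k i) = 0 \<longleftrightarrow> (\<forall>i\<in>{1..k}. off_diag k i = 0)"
    by (simp add: sum_nonneg_eq_0_iff off_diag_nonneg)
  have S: "(\<Sum>i\<in>{1..k}. defect k i) = 0 \<longleftrightarrow> (\<forall>i\<in>{1..k}. defect k i = 0)"
    using defect_nonneg[OF two_le_k] sub by (subst sum_nonneg_eq_0_iff) force+
  have V: "(\<Sum>i\<in>{1..k}. \<Sum>j\<in>{1..k}. (norm (diag i - diag j))\<^sup>2) = 0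
      \<longleftrightarrow> (\<forall>i\<in>{1..k}. \<forall>j\<in>{1..k}. diag i = diag j)"
    by (simp add: sum_nonneg_eq_0_iff sum_nonneg)
  have "lhs \<alpha> e k = real (k * (CARD('n) - k)) \<longleftrightarrow>
      (\<forall>i\<in>{1..k}. Ric \<alpha> (e i) = bndH) \<and> (\<forall>i\<in>{1..k}. off_diag k i = 0) \<and>
      (\<forall>i\<in>{1..k}. defect k i = 0) \<and> (\<forall>i\<in>{1..k}. \<forall>j\<in>{1..k}. diag i = diag j)"
  proof -
    have "0 \<le> (\<Sum>i\<in>{1..k}. Ric \<alpha> (e i) - bndH)" "0 \<le> (\<Sum>i\<in>{1..k}. off_diag k i)"
      "0 \<le> (\<Sum>i\<in>{1..k}. defect k i)" "0 \<le> (\<Sum>i\<in>{1..k}. \<Sum>j\<in>{1..k}. (norm (diag i - diag j))\<^sup>2)"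
      using Ric_frame_ge defect_nonneg[OF two_le_k] sub
      by (auto intro!: sum_nonneg simp: off_diag_nonneg)
    then show ?thesis
      unfolding R[symmetric] D[symmetric] S[symmetric] V[symmetric] lhs_decomposition[OF k_le_n]
      using k_le_n by (simp add: of_nat_diff) (intro iffI conjI; (elim conjE)?; linarith)
  qed
  moreover have "1 \<le> k" using two_le_k by simp
  ultimately show ?thesis using umbilic_block_iff[of k] k_le_n by blast
qed

lemma lhs_eq_imp_p_eq_k:
  assumes "1 \<le> p" "p \<le> k" "lhs \<alpha> e p = real (p * (CARD('n) - p))"
  shows "p = k"
  using lhs_less[of p] assms by fastforce

lemma lhs_eq_imp_dupin:
  assumes "k = 2 \<longrightarrow> meancurv \<alpha> \<noteq> 0" "1 \<le> p" "p \<le> k" "lhs \<alpha> e p = real (p * (CARD('n) - p))"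
  shows "p = k \<and> (\<exists>\<eta>. dupin_normal \<alpha> \<eta> \<and> norm \<eta> = lamH \<and> span (e ` {1..k}) \<subseteq> Eset \<alpha> \<eta>)"
proof -
  have p: "p = k" using lhs_eq_imp_p_eq_k assms(2-4) .
  have block: "Ric \<alpha> (e i) = bndH \<and> defect k i = 0 \<and>
      (\<forall>j\<in>{1..k}. \<alpha> (e i) (e j) = (e i \<bullet> e j) *\<^sub>R diag 1)" if "i \<in> {1..k}" for i
    using assms(4) that unfolding p lhs_eq_iff by blast
  have in_Eset: "e i \<in> Eset \<alpha> (diag 1)" if i: "i \<in> {1..k}" for i
  proof -
    have iI: "i \<in> {1..CARD('n)}" using i k_le_n by simp
    note diag_eq = defect_eq_0_imp[OF assms(1) iI]
    have "off_diag (CARD('n)) i = 0"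
      using block[OF i] Ric_frame_vector[OF iI] diag_eq unfolding bndH_eq by simp
    moreover have "diag i = diag 1" using block[OF i] i frame_inner[OF iI iI] by simp
    ultimately show ?thesis using frame_vector_in_Eset[OF iI] by simp
  qed
  have span: "span (e ` {1..k}) \<subseteq> Eset \<alpha> (diag 1)"
    using in_Eset by (intro span_minimal subspace_Eset) auto
  have "defect k 1 = 0" using block[of 1] two_le_k by simp
  then have "norm (diag 1) = lamH"
    using defect_eq_0_imp(1)[OF assms(1)] two_le_k k_le_n by simp
  then show ?thesis
    using p span dupin_normal_of_frame_span[OF two_le_k k_le_n span] by blast
qed

lemma inner_meanvec_of_umbilic_span:
  assumes "span (e ` {1..k}) \<subseteq> Eset \<alpha> \<eta>" "norm \<eta> = lamH"
  shows "\<eta> \<bullet> meanvec \<alpha> = meancurv \<alpha> * lamH"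
proof -
  have one: "1 \<in> {1..CARD('n)}" using two_le_k k_le_n by simp
  have "e 1 \<in> span (e ` {1..k})" using two_le_k by (intro span_base imageI) simp
  then have "e 1 \<in> Eset \<alpha> \<eta>" using assms(1) by blast
  then have "meancurv \<alpha> * lamH \<le> \<eta> \<bullet> meanvec \<alpha>"
    using Ric_frame_ge[OF one] Ric_Eset[of "e 1" \<eta>] norm_frame[OF one] assms(2)
    unfolding bndH_eq by (simp add: ac_simps)
  moreover have "\<eta> \<bullet> meanvec \<alpha> \<le> meancurv \<alpha> * lamH"
    using norm_cauchy_schwarz[of \<eta> "meanvec \<alpha>"] assms(2) by (simp add: meancurv_def mult.commute)
  ultimately show ?thesis by simp
qed

lemma Ric_eq_of_umbilic_span:
  assumes "span (e ` {1..k}) \<subseteq> Eset \<alpha> \<eta>" "norm \<eta> = lamH"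
    and "X \<in> span (e ` {1..k})" "norm X = 1"
  shows "Ric \<alpha> X = bndH"
  using Ric_Eset[of X \<eta>] inner_meanvec_of_umbilic_span[OF assms(1,2)] assms
  unfolding bndH_eq by (auto simp: ac_simps)

lemma collinear_of_umbilic_span:
  assumes "span (e ` {1..k}) \<subseteq> Eset \<alpha> \<eta>" "norm \<eta> = lamH"
  shows "collinear {0, \<eta>, meanvec \<alpha>}"
proof -
  have "\<bar>\<eta> \<bullet> meanvec \<alpha>\<bar> = norm \<eta> * norm (meanvec \<alpha>)"
    using inner_meanvec_of_umbilic_span[OF assms] assms(2) lamH_pos
    by (simp add: meancurv_def mult.commute)
  then show ?thesis using norm_cauchy_schwarz_equal by blast
qed

lemma lhs_eq_of_umbilic_span:
  assumes "span (e ` {1..k}) \<subseteq> Eset \<alpha> \<eta>" "norm \<eta> = lamH"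
  shows "lhs \<alpha> e k = real (k * (CARD('n) - k))"
  unfolding lhs_eq_iff
proof (intro ballI conjI)
  fix i assume i: "i \<in> {1..k}"
  then have iI: "i \<in> {1..CARD('n)}" and Ei: "e i \<in> span (e ` {1..k})" and one: "1 \<in> {1..k}"
    using k_le_n two_le_k by (auto intro: span_base imageI)
  have umb: "\<alpha> (e j) Y = (e j \<bullet> Y) *\<^sub>R \<eta>" if "j \<in> {1..k}" for j Y
  proof -
    have "e j \<in> span (e ` {1..k})" using that by (intro span_base imageI)
    then show ?thesis using assms(1) unfolding Eset_def by blast
  qed
  show "Ric \<alpha> (e i) = bndH" using Ric_eq_of_umbilic_span[OF assms Ei norm_frame[OF iI]] .
  have diag: "diag j = \<eta>" if "j \<in> {1..k}" for j
    using umb[OF that] that k_le_n frame_inner[of j j] by simp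
  show "defect k i = 0"
    using inner_meanvec_of_umbilic_span[OF assms] assms(2) unfolding defect_def diag[OF i] by simp
  fix j
  show "\<alpha> (e i) (e j) = (e i \<bullet> e j) *\<^sub>R diag 1" using umb[OF i] diag[OF one] by simp
qed

lemma lhs_eq_imp_umbilic_plane:
  assumes "k = 2" "1 \<le> p" "p \<le> 2" "lhs \<alpha> e p = real (p * (CARD('n) - p))"
  shows "p = 2 \<and>
    (\<exists>\<eta>. norm \<eta> \<le> lamH \<and> (\<forall>X\<in>span (e ` {1..2}). \<forall>Y\<in>span (e ` {1..2}). \<alpha> X Y = (X \<bullet> Y) *\<^sub>R \<eta>)) \<and>
    (\<forall>X\<in>span (e ` {1..2}). norm X = 1 \<longrightarrow> Ric \<alpha> X = bndH)"
proof -
  have p: "p = 2" using lhs_eq_imp_p_eq_k assms by simp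
  have one: "1 \<in> {1..CARD('n)}" and two: "2 \<in> {1..CARD('n)}" using k_le_n assms(1) by auto
  have "lhs \<alpha> e k = real (k * (CARD('n) - k))" using assms(1,4) p by simp
  then have "\<forall>i\<in>{1..k}. Ric \<alpha> (e i) = bndH \<and> defect k i = 0 \<and>
      (\<forall>j\<in>{1..k}. \<alpha> (e i) (e j) = (e i \<bullet> e j) *\<^sub>R diag 1)"
    unfolding lhs_eq_iff .
  then have block: "Ric \<alpha> (e i) = bndH \<and> (\<forall>j\<in>{1..2}. \<alpha> (e i) (e j) = (e i \<bullet> e j) *\<^sub>R diag 1)"
    if "i \<in> {1..2}" for i
    using that unfolding assms(1) by blast
  have "\<forall>X\<in>e ` {1..2}. \<forall>Y\<in>e ` {1..2}. \<alpha> X Y = (X \<bullet> Y) *\<^sub>R diag 1"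
    using block by blast
  then have umbilic: "\<forall>X\<in>span (e ` {1..2}). \<forall>Y\<in>span (e ` {1..2}). \<alpha> X Y = (X \<bullet> Y) *\<^sub>R diag 1"
    by (rule umbilic_on_span)
  have "Ric \<alpha> X = bndH" if X: "X \<in> span (e ` {1..2})" "norm X = 1" for X
  proof -
    have "e ` {1..2} = {e 1, e 2}" by (auto simp: numeral_2_eq_2 le_Suc_eq)
    then obtain x y where xy: "X = x *\<^sub>R e 1 + y *\<^sub>R e 2"
      using X(1) in_span_pairE by metis
    have orth: "e 1 \<bullet> e 1 = 1" "e 2 \<bullet> e 2 = 1" "e 1 \<bullet> e 2 = 0"
      using frame_inner[OF one one] frame_inner[OF two two] frame_inner[OF one two] by simp_all
    then have "x\<^sup>2 + y\<^sup>2 = 1"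
      using X(2) unfolding xy norm_eq_1
      by (simp add: inner_add_left inner_add_right inner_commute power2_eq_square)
    moreover have "Ric \<alpha> (e 1) = bndH" "Ric \<alpha> (e 2) = bndH"
      using conjunct1[OF block[of 1]] conjunct1[OF block[of 2]] by simp_all
    ultimately show ?thesis
      using Ric_constant_on_circle[OF orth, of bndH x y] Ric_ge unfolding xy by simp
  qed
  then show ?thesis using p umbilic norm_diag_le_lamH[OF one] by blast
qed

lemma lhs_eq_of_umbilic_plane:
  assumes "meancurv \<alpha> = 0" "k = 2"
    and umbilic: "\<forall>X\<in>span (e ` {1..2}). \<forall>Y\<in>span (e ` {1..2}). \<alpha> X Y = (X \<bullet> Y) *\<^sub>R \<eta>"
    and Ric_eq: "\<forall>X\<in>span (e ` {1..2}). norm X = 1 \<longrightarrow> Ric \<alpha> X = bndH"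
  shows "lhs \<alpha> e 2 = real (2 * (CARD('n) - 2))"
proof -
  have block: "\<alpha> (e i) (e j) = (e i \<bullet> e j) *\<^sub>R \<eta>" if "i \<in> {1..2}" "j \<in> {1..2}" for i j
    using umbilic that by (simp add: span_base)
  have "Ric \<alpha> (e i) = bndH \<and> defect k i = 0 \<and>
      (\<forall>j\<in>{1..k}. \<alpha> (e i) (e j) = (e i \<bullet> e j) *\<^sub>R diag 1)" if i: "i \<in> {1..k}" for i
  proof (intro conjI ballI)
    have iI: "i \<in> {1..CARD('n)}" and i2: "i \<in> {1..2}" and one: "(1::nat) \<in> {1..2}"
      using i k_le_n assms(2) by auto
    then have "diag i = \<eta>" and "diag 1 = \<eta>"
      using block[OF i2 i2] block[OF one one] frame_inner[OF iI iI] k_le_n assms(2)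
      by (simp_all add: frame_inner)
    show "Ric \<alpha> (e i) = bndH" using Ric_eq norm_frame[OF iI] i2 by (simp add: span_base)
    show "defect k i = 0"
      using assms(1,2) unfolding defect_def meancurv_def by simp
    fix j assume "j \<in> {1..k}"
    then show "\<alpha> (e i) (e j) = (e i \<bullet> e j) *\<^sub>R diag 1"
      using block[OF i2] \<open>diag 1 = \<eta>\<close> assms(2) by simp
  qed
  then have "lhs \<alpha> e k = real (k * (CARD('n) - k))" unfolding lhs_eq_iff by blast
  with assms(2) show ?thesis by simp
qed

lemma lhs_eq_iff_dupin:
  assumes "k = 2 \<longrightarrow> meancurv \<alpha> \<noteq> 0" "1 \<le> p" "p \<le> k"
  shows "lhs \<alpha> e p = real (p * (CARD('n) - p)) \<longleftrightarrow>
    p = k \<and> (\<exists>\<eta>. dupin_normal \<alpha> \<eta> \<and> norm \<eta> = lamH \<and> span (e ` {1..k}) \<subseteq> Eset \<alpha> \<eta>)"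
  using lhs_eq_imp_dupin[OF assms] lhs_eq_of_umbilic_span by blast

lemma lhs_eq_iff_umbilic_plane:
  assumes "meancurv \<alpha> = 0" "k = 2" "1 \<le> p" "p \<le> 2"
  shows "lhs \<alpha> e p = real (p * (CARD('n) - p)) \<longleftrightarrow> p = 2 \<and>
    (\<exists>\<eta>. norm \<eta> \<le> lam (real CARD('n)) 2 0 \<and>
      (\<forall>X\<in>span (e ` {1..2}). \<forall>Y\<in>span (e ` {1..2}). \<alpha> X Y = (X \<bullet> Y) *\<^sub>R \<eta>)) \<and>
    (\<forall>X\<in>span (e ` {1..2}). norm X = 1 \<longrightarrow> Ric \<alpha> X = bnd (real CARD('n)) 2 0)"
    (is "?eq \<longleftrightarrow> ?umbilic")
proof -
  have lam_bnd: "lamH = lam (real CARD('n)) 2 0" "bndH = bnd (real CARD('n)) 2 0"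
    using assms(1,2) by simp_all
  show ?thesis
  proof
    assume ?eq
    then show ?umbilic using lhs_eq_imp_umbilic_plane[OF assms(2-)] unfolding lam_bnd by blast
  next
    assume ?umbilic
    then show ?eq
      using lhs_eq_of_umbilic_plane[OF assms(1,2)] unfolding lam_bnd by blast
  qed
qed

end

theorem proposition5:
  fixes \<alpha> :: "real^'n \<Rightarrow> real^'n \<Rightarrow> real^'m" and k :: nat
  assumes "sff \<alpha>"
    and "2 \<le> k" and "2 * k \<le> CARD('n)"
    and ric: "\<forall>X. norm X = 1 \<longrightarrow> Ric \<alpha> X \<ge> bnd (real CARD('n)) (real k) (meancurv \<alpha>)"
  shows
    \<comment> \<open>(i)\<close>
    "(\<forall>e p. onb e \<and> 1 \<le> p \<and> p \<le> k \<longrightarrow>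
         lhs \<alpha> e p \<le> real (p * (CARD('n) - p))) \<and>
     (\<forall>e p. onb e \<and> 1 \<le> p \<and> p < k \<longrightarrow>
         lhs \<alpha> e p < real (p * (CARD('n) - p))) \<and>
     ((\<forall>X. norm X = 1 \<longrightarrow> Ric \<alpha> X > bnd (real CARD('n)) (real k) (meancurv \<alpha>)) \<longrightarrow>
        (\<forall>e. onb e \<longrightarrow> lhs \<alpha> e k < real (k * (CARD('n) - k))))
     \<comment> \<open>(ii)\<close>
     \<and> ((k = 2 \<longrightarrow> meancurv \<alpha> \<noteq> 0) \<longrightarrow>
        (\<forall>e p. onb e \<and> 1 \<le> p \<and> p \<le> k \<longrightarrow>
           (lhs \<alpha> e p = real (p * (CARD('n) - p)) \<longleftrightarrow>
             p = k \<and> (\<exists>\<eta>. dupin_normal \<alpha> \<eta> \<and>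
                 norm \<eta> = lam (real CARD('n)) (real k) (meancurv \<alpha>) \<and>
                 span (e ` {1..k}) \<subseteq> Eset \<alpha> \<eta>))) \<and>
        (\<forall>e \<eta>. onb e \<and> lhs \<alpha> e k = real (k * (CARD('n) - k)) \<and> dupin_normal \<alpha> \<eta> \<and>
             norm \<eta> = lam (real CARD('n)) (real k) (meancurv \<alpha>) \<and>
             span (e ` {1..k}) \<subseteq> Eset \<alpha> \<eta> \<longrightarrow>
           (\<forall>X\<in>span (e ` {1..k}). norm X = 1 \<longrightarrow>
               Ric \<alpha> X = bnd (real CARD('n)) (real k) (meancurv \<alpha>)) \<and>
           (meancurv \<alpha> \<noteq> 0 \<longrightarrow> collinear {0, \<eta>, meanvec \<alpha>})))
     \<comment> \<open>(iii)\<close>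
     \<and> (meancurv \<alpha> = 0 \<and> k = 2 \<longrightarrow>
        (\<forall>e p. onb e \<and> 1 \<le> p \<and> p \<le> 2 \<longrightarrow>
           (lhs \<alpha> e p = real (p * (CARD('n) - p)) \<longleftrightarrow>
             p = 2 \<and>
             (\<exists>\<eta>. norm \<eta> \<le> lam (real CARD('n)) 2 0 \<and>
                (\<forall>X\<in>span (e ` {1..2}). \<forall>Y\<in>span (e ` {1..2}). \<alpha> X Y = (X \<bullet> Y) *\<^sub>R \<eta>)) \<and>
             (\<forall>X\<in>span (e ` {1..2}). norm X = 1 \<longrightarrow>
                Ric \<alpha> X = bnd (real CARD('n)) 2 0))))"
proof -
  have pinched: "ricci_pinched \<alpha> e k" if "onb e" for e
    using assms that
    by (intro ricci_pinched.intro sff_frame.intro second_fundamental_form.intro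
        orthonormal_frame.intro ricci_pinched_axioms.intro)
  show ?thesis
    by (intro conjI allI impI ballI; (elim conjE)?;
        rule ricci_pinched.lhs_le[OF pinched] ricci_pinched.lhs_less[OF pinched]
          ricci_pinched.lhs_less_of_Ric_gt[OF pinched] ricci_pinched.lhs_eq_iff_dupin[OF pinched]
          ricci_pinched.Ric_eq_of_umbilic_span[OF pinched] ricci_pinched.collinear_of_umbilic_span[OF pinched]
          ricci_pinched.lhs_eq_iff_umbilic_plane[OF pinched];
        assumption)
qed

end
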